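(* Assume Assumption 1, Assumption 2 and the null hypothesis $H_0:\ T_i(1)=T_i(0)$ for all $i$, and condition on $\boldsymbol{T}(1),\boldsymbol{T}(0)$. Then for each $1\le k\le K$, conditional on $N_k$, the variables $D_k$ and $N_{1k}$ are independent, and $$D_k\mid\boldsymbol{T}(1),\boldsymbol{T}(0),N_k\sim\mathrm{HGeom}(n_k,d_k,N_k),\qquad N_{1k}\mid\boldsymbol{T}(1),\boldsymbol{T}(0),N_k\sim\mathrm{Bin}(N_k,\phi_k).$$
   Context: There are $n$ units. Unit $i$ has potential event times $T_i(1),T_i(0)\ge 0$, potential censoring times $C_i(1),C_i(0)\in[0,\infty]$, and treatment indicator $Z_i\in\{0,1\}$; bold letters denote $n$-vectors. Assumption 1: conditional on $\boldsymbol{T}(1),\boldsymbol{T}(0),\boldsymbol{C}(1),\boldsymbol{C}(0)$, the $Z_i$ are i.i.d. Bernoulli$(p_1)$, $p_1=1-p_0\in(0,1)$. Assumption 2: $(\boldsymbol{C}(1),\boldsymbol{C}(0))$ is independent of $(\boldsymbol{T}(1),\boldsymbol{T}(0))$ and the pairs $(C_i(1),C_i(0))$ are i.i.d. across $i$. $G_z(c)=\Pr(C_i(z)\ge c)$, $G(t)=p_1G_1(t)+p_0G_0(t)$. Realized: $W_i=\min\{T_i,C_i\}$, $\Delta_i=\mathbb{1}(T_i\le C_i)$ with $T_i=Z_iT_i(1)+(1-Z_i)T_i(0)$, $C_i=Z_iC_i(1)+(1-Z_i)C_i(0)$. Let $t_1<\dots<t_K$ be the distinct values of $\{T_i(0)\}$,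 $d_k=\#\{i:T_i(0)=t_k\}$, $n_k=\#\{i:T_i(0)\ge t_k\}$, $\phi_k=p_1G_1(t_k)/G(t_k)$; $N_{1k}=\sum_iZ_i\mathbb{1}(W_i\ge t_k)$, $N_k=\sum_i\mathbb{1}(W_i\ge t_k)$, $D_k=\sum_i\Delta_i\mathbb{1}(W_i=t_k)$. $\mathrm{HGeom}(m,k,b)$: number of successes in $b$ draws without replacement from $m$ items containing $k$ successes; $\mathrm{Bin}(m,p)$: binomial. *)

theory Defs
  imports "HOL-Probability.Probability"
begin

text \<open>Sample space: for each unit i, a triple (Z_i, (C_i(1), C_i(0))).
  Censoring times live in [0,\<infinity>], modelled as ennreal.\<close>
type_synonym outcome = "nat \<Rightarrow> bool \<times> (ennreal \<times> ennreal)"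

definition Zv :: "outcome \<Rightarrow> nat \<Rightarrow> bool" where
  "Zv \<omega> i = fst (\<omega> i)"

definition C1v :: "outcome \<Rightarrow> nat \<Rightarrow> ennreal" where
  "C1v \<omega> i = fst (snd (\<omega> i))"

definition C0v :: "outcome \<Rightarrow> nat \<Rightarrow> ennreal" where
  "C0v \<omega> i = snd (snd (\<omega> i))"

definition Tr :: "(nat \<Rightarrow> real) \<Rightarrow> (nat \<Rightarrow> real) \<Rightarrow> outcome \<Rightarrow> nat \<Rightarrow> real" where
  "Tr T1 T0 \<omega> i = (if Zv \<omega> i then T1 i else T0 i)"

definition Cr :: "outcome \<Rightarrow> nat \<Rightarrow> ennreal" where
  "Cr \<omega> i = (if Zv \<omega> i then C1v \<omega> i else C0v \<omega> i)"

definition Wr :: "(nat \<Rightarrow> real) \<Rightarrow> (nat \<Rightarrow> real) \<Rightarrow> outcome \<Rightarrow> nat \<Rightarrow> ennreal" where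
  "Wr T1 T0 \<omega> i = min (ennreal (Tr T1 T0 \<omega> i)) (Cr \<omega> i)"

definition Deltar :: "(nat \<Rightarrow> real) \<Rightarrow> (nat \<Rightarrow> real) \<Rightarrow> outcome \<Rightarrow> nat \<Rightarrow> bool" where
  "Deltar T1 T0 \<omega> i = (ennreal (Tr T1 T0 \<omega> i) \<le> Cr \<omega> i)"

text \<open>Distinct values t_1 < ... < t_K of T(0) over units 0..n-1 (1-indexed).\<close>
definition Kval :: "nat \<Rightarrow> (nat \<Rightarrow> real) \<Rightarrow> nat" where
  "Kval n T0 = card (T0 ` {..<n})"

definition tval :: "nat \<Rightarrow> (nat \<Rightarrow> real) \<Rightarrow> nat \<Rightarrow> real" where
  "tval n T0 k = sorted_list_of_set (T0 ` {..<n}) ! (k - 1)"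

definition dval :: "nat \<Rightarrow> (nat \<Rightarrow> real) \<Rightarrow> nat \<Rightarrow> nat" where
  "dval n T0 k = card {i \<in> {..<n}. T0 i = tval n T0 k}"

definition nval :: "nat \<Rightarrow> (nat \<Rightarrow> real) \<Rightarrow> nat \<Rightarrow> nat" where
  "nval n T0 k = card {i \<in> {..<n}. T0 i \<ge> tval n T0 k}"

definition G1 :: "(ennreal \<times> ennreal) measure \<Rightarrow> real \<Rightarrow> real" where
  "G1 Cd c = measure Cd {x \<in> space Cd. ennreal c \<le> fst x}"

definition G0 :: "(ennreal \<times> ennreal) measure \<Rightarrow> real \<Rightarrow> real" where
  "G0 Cd c = measure Cd {x \<in> space Cd. ennreal c \<le> snd x}"

definition Gmix :: "real \<Rightarrow> (ennreal \<times> ennreal) measure \<Rightarrow> real \<Rightarrow> real" where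
  "Gmix p1 Cd c = p1 * G1 Cd c + (1 - p1) * G0 Cd c"

definition phival :: "real \<Rightarrow> (ennreal \<times> ennreal) measure \<Rightarrow> nat \<Rightarrow> (nat \<Rightarrow> real) \<Rightarrow> nat \<Rightarrow> real" where
  "phival p1 Cd n T0 k = p1 * G1 Cd (tval n T0 k) / Gmix p1 Cd (tval n T0 k)"

definition N1k :: "nat \<Rightarrow> (nat \<Rightarrow> real) \<Rightarrow> (nat \<Rightarrow> real) \<Rightarrow> nat \<Rightarrow> outcome \<Rightarrow> nat" where
  "N1k n T1 T0 k \<omega> = card {i \<in> {..<n}. Zv \<omega> i \<and> ennreal (tval n T0 k) \<le> Wr T1 T0 \<omega> i}"

definition Nk :: "nat \<Rightarrow> (nat \<Rightarrow> real) \<Rightarrow> (nat \<Rightarrow> real) \<Rightarrow> nat \<Rightarrow> outcome \<Rightarrow> nat" where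
  "Nk n T1 T0 k \<omega> = card {i \<in> {..<n}. ennreal (tval n T0 k) \<le> Wr T1 T0 \<omega> i}"

definition Dk :: "nat \<Rightarrow> (nat \<Rightarrow> real) \<Rightarrow> (nat \<Rightarrow> real) \<Rightarrow> nat \<Rightarrow> outcome \<Rightarrow> nat" where
  "Dk n T1 T0 k \<omega> = card {i \<in> {..<n}. Deltar T1 T0 \<omega> i \<and> Wr T1 T0 \<omega> i = ennreal (tval n T0 k)}"

definition hgeom :: "nat \<Rightarrow> nat \<Rightarrow> nat \<Rightarrow> nat \<Rightarrow> real" where
  "hgeom m k b a = (if a \<le> b then real (k choose a) * real ((m - k) choose (b - a)) / real (m choose b) else 0)"

definition design :: "nat \<Rightarrow> real \<Rightarrow> (ennreal \<times> ennreal) measure \<Rightarrow> outcome measure" where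
  "design n p1 Cd = PiM {..<n} (\<lambda>_. measure_pmf (bernoulli_pmf p1) \<Otimes>\<^sub>M Cd)"

end

theory Submission
  imports Defs
begin

(* Under H0 unit i has event time T0 i in either arm, so N_k, D_k and N_1k only depend on the
   pairs (Z_i, [C_i >= t_k]) of the n_k units with T0 i >= t_k. These pairs are i.i.d., and by
   Bayes' rule their common law is also obtained by first drawing R_i = [C_i >= t_k] with
   probability G(t_k) and then Z_i given R_i, with P(Z_i = 1 | R_i = 1) = phi_k. So the risk set
   contains each of the n_k units independently with probability G(t_k): given its size N_k, the
   number D_k of its members failing at t_k is hypergeometric, and given the whole risk set the
   treated count N_1k is Bin(N_k, phi_k), whatever D_k is. *)

section \<open>Counting successes of independent Bernoulli trials\<close>

lemma card_Pi_pmf_bernoulli: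
  assumes "finite U" "A \<subseteq> U" "p \<in> {0..1}" "\<And>i. i \<in> A \<Longrightarrow> q i = p"
  shows "map_pmf (\<lambda>f. card {i\<in>A. f i}) (Pi_pmf U False (\<lambda>i. bernoulli_pmf (q i)))
       = binomial_pmf (card A) p"
proof -
  have "finite A" using assms(1,2) by (rule finite_subset[rotated])
  have "map_pmf (\<lambda>f. card {i\<in>A. f i}) (Pi_pmf U False (\<lambda>i. bernoulli_pmf (q i)))
      = map_pmf (\<lambda>f. card {i\<in>A. f i}) (Pi_pmf A False (\<lambda>i. bernoulli_pmf (q i)))"
    unfolding Pi_pmf_subset[OF assms(1,2)] map_pmf_comp
    by (intro map_pmf_cong refl) (simp, intro arg_cong[where f = card]; blast)
  also have "Pi_pmf A False (\<lambda>i. bernoulli_pmf (q i)) = Pi_pmf A False (\<lambda>_. bernoulli_pmf p)"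
    using assms(4) by (intro Pi_pmf_cong) auto
  finally show ?thesis
    using binomial_pmf_altdef'[OF \<open>finite A\<close> refl assms(3)] by simp
qed

lemma card_pair_Pi_pmf_bernoulli:
  assumes "finite U" "A \<subseteq> U" "B \<subseteq> U" "A \<inter> B = {}" "p \<in> {0..1}"
  shows "map_pmf (\<lambda>f. (card {i\<in>A. f i}, card {i\<in>B. f i})) (Pi_pmf U False (\<lambda>_. bernoulli_pmf p))
       = pair_pmf (binomial_pmf (card A) p) (binomial_pmf (card B) p)"
proof -
  let ?P = "\<lambda>I. Pi_pmf I False (\<lambda>_. bernoulli_pmf p)"
  let ?cards = "\<lambda>f. (card {i\<in>A. f i}, card {i\<in>B. f i})"
  have fin: "finite A" "finite B" using assms(1-3) finite_subset by auto
  have AB: "A \<union> B \<subseteq> U" using assms(2,3) by simp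
  have "map_pmf ?cards (?P U) = map_pmf ?cards (?P (A \<union> B))"
    unfolding Pi_pmf_subset[OF assms(1) AB] map_pmf_comp
    by (intro map_pmf_cong refl) (auto intro!: arg_cong[where f = card])
  also have "\<dots> = map_pmf (\<lambda>(f, g). (card {i\<in>A. f i}, card {i\<in>B. g i}))
                    (pair_pmf (?P A) (?P B))"
    unfolding Pi_pmf_union[OF fin assms(4)] map_pmf_comp
    using assms(4) by (intro map_pmf_cong) (auto intro!: arg_cong[where f = card])
  also have "\<dots> = pair_pmf (binomial_pmf (card A) p) (binomial_pmf (card B) p)"
    unfolding map_pair
    using card_Pi_pmf_bernoulli[of A A p "\<lambda>_. p"] card_Pi_pmf_bernoulli[of B B p "\<lambda>_. p"] fin assms(5)
    by simp
  finally show ?thesis .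
qed

lemma binomial_pmf_mult_eq_hgeom:
  fixes p :: real and N d m a :: nat
  assumes "p \<in> {0..1}" "d \<le> N" "a \<le> m"
  shows "pmf (binomial_pmf d p) a * pmf (binomial_pmf (N - d) p) (m - a)
       = pmf (binomial_pmf N p) m * hgeom N d m a"
proof (cases "a \<le> d \<and> m - a \<le> N - d")
  case True
  then have "m \<le> N" using assms by linarith
  have "pmf (binomial_pmf d p) a * pmf (binomial_pmf (N - d) p) (m - a)
      = real (d choose a) * real ((N - d) choose (m - a))
        * (p ^ a * p ^ (m - a)) * ((1 - p) ^ (d - a) * (1 - p) ^ (N - d - (m - a)))"
    using assms(1) by (simp add: pmf_binomial mult_ac)
  also have "\<dots> = real (d choose a) * real ((N - d) choose (m - a)) * p ^ m * (1 - p) ^ (N - m)"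
  proof -
    have "a + (m - a) = m" "d - a + (N - d - (m - a)) = N - m"
      using True assms(2,3) by linarith+
    then show ?thesis by (simp only: power_add[symmetric])
  qed
  also have "\<dots> = pmf (binomial_pmf N p) m * hgeom N d m a"
    using assms(1,3) \<open>m \<le> N\<close> by (simp add: pmf_binomial hgeom_def)
  finally show ?thesis .
next
  case False
  then have "d choose a = 0 \<or> (N - d) choose (m - a) = 0" by auto
  then show ?thesis using assms by (auto simp: pmf_binomial hgeom_def)
qed

lemma prob_card_Pi_pmf_bernoulli_hgeom:
  assumes "finite U" "B \<subseteq> A" "A \<subseteq> U" "p \<in> {0..1}"
  shows "measure_pmf.prob (Pi_pmf U False (\<lambda>_. bernoulli_pmf p))
           {f. card {i\<in>A. f i} = m \<and> card {i\<in>B. f i} = a}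
       = pmf (binomial_pmf (card A) p) m * hgeom (card A) (card B) m a"
proof -
  let ?P = "Pi_pmf U False (\<lambda>_. bernoulli_pmf p)"
  let ?cards = "\<lambda>f. (card {i\<in>B. f i}, card {i\<in>A - B. f i})"
  have fin: "finite A" "finite B"
    using finite_subset[OF assms(3,1)] finite_subset[OF assms(2)] by blast+
  have card_split: "card {i\<in>A. f i} = card {i\<in>B. f i} + card {i\<in>A - B. f i}" for f
  proof -
    have "card {i\<in>A. f i} = card ({i\<in>B. f i} \<union> {i\<in>A - B. f i})"
      using assms(2) by (intro arg_cong[where f = card]) blast
    also have "\<dots> = card {i\<in>B. f i} + card {i\<in>A - B. f i}"
      using fin by (intro card_Un_disjoint) auto
    finally show ?thesis .
  qed
  show ?thesis
  proof (cases "a \<le> m")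
    case True
    have "card {i\<in>A. f i} = m \<and> card {i\<in>B. f i} = a \<longleftrightarrow> ?cards f = (a, m - a)" for f
      using card_split[of f] True by (simp only: prod.inject) linarith
    then have "{f. card {i\<in>A. f i} = m \<and> card {i\<in>B. f i} = a} = ?cards -` {(a, m - a)}"
      by blast
    then have "measure_pmf.prob ?P {f. card {i\<in>A. f i} = m \<and> card {i\<in>B. f i} = a}
             = pmf (map_pmf ?cards ?P) (a, m - a)"
      by (simp only: pmf_map)
    also have "\<dots> = pmf (binomial_pmf (card B) p) a * pmf (binomial_pmf (card (A - B)) p) (m - a)"
    proof -
      have "B \<subseteq> U" "A - B \<subseteq> U" "B \<inter> (A - B) = {}" using assms(2,3) by auto
      then have "map_pmf ?cards ?P = pair_pmf (binomial_pmf (card B) p) (binomial_pmf (card (A - B)) p)"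
        by (rule card_pair_Pi_pmf_bernoulli[OF assms(1) _ _ _ assms(4)])
      then show ?thesis by (simp only: pmf_pair)
    qed
    also have "\<dots> = pmf (binomial_pmf (card A) p) m * hgeom (card A) (card B) m a"
      using binomial_pmf_mult_eq_hgeom[OF assms(4) card_mono[OF fin(1) assms(2)] True]
        card_Diff_subset[OF fin(2) assms(2)] by simp
    finally show ?thesis .
  next
    case False
    have "\<not> (card {i\<in>A. f i} = m \<and> card {i\<in>B. f i} = a)" for f
      using card_split[of f] False by linarith
    then have "{f. card {i\<in>A. f i} = m \<and> card {i\<in>B. f i} = a} = {}"
      by blast
    then show ?thesis using False by (simp add: hgeom_def del: Collect_empty_eq)
  qed
qed

section \<open>Pairs of Bernoulli variables generated conditionally\<close>

definition cond_bernoulli_pmf :: "real \<Rightarrow> real \<Rightarrow> real \<Rightarrow> (bool \<times> bool) pmf" where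
  "cond_bernoulli_pmf g \<phi> \<psi> =
     bernoulli_pmf g \<bind> (\<lambda>r. map_pmf (\<lambda>z. (z, r)) (bernoulli_pmf (if r then \<phi> else \<psi>)))"

lemma Pi_pmf_cond_bernoulli:
  assumes "finite U"
  shows "Pi_pmf U d (\<lambda>_. cond_bernoulli_pmf g \<phi> \<psi>) =
           Pi_pmf U False (\<lambda>_. bernoulli_pmf g) \<bind> (\<lambda>r.
             map_pmf (\<lambda>z i. if i \<in> U then (z i, r i) else d)
               (Pi_pmf U False (\<lambda>i. bernoulli_pmf (if r i then \<phi> else \<psi>))))"
proof -
  have "Pi_pmf U d (\<lambda>_. cond_bernoulli_pmf g \<phi> \<psi>) =
          Pi_pmf U False (\<lambda>_. bernoulli_pmf g) \<bind> (\<lambda>r.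
            Pi_pmf U d (\<lambda>i. bernoulli_pmf (if r i then \<phi> else \<psi>) \<bind> (\<lambda>z. return_pmf (z, r i))))"
    unfolding cond_bernoulli_pmf_def map_pmf_def by (rule Pi_pmf_bind[OF assms])
  also have "\<dots> = Pi_pmf U False (\<lambda>_. bernoulli_pmf g) \<bind> (\<lambda>r.
            Pi_pmf U False (\<lambda>i. bernoulli_pmf (if r i then \<phi> else \<psi>)) \<bind> (\<lambda>z.
              Pi_pmf U d (\<lambda>i. return_pmf (z i, r i))))"
    by (intro bind_pmf_cong refl Pi_pmf_bind[OF assms])
  finally show ?thesis using assms by (simp add: map_pmf_def)
qed

lemma map_pmf_counts_Pi_cond_bernoulli:
  assumes "finite U" "B \<subseteq> A" "A \<subseteq> U" "\<phi> \<in> {0..1}"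
  shows "map_pmf (\<lambda>s. (card {i\<in>A. snd (s i)}, card {i\<in>B. snd (s i)}, card {i\<in>A. fst (s i) \<and> snd (s i)}))
           (Pi_pmf U d (\<lambda>_. cond_bernoulli_pmf g \<phi> \<psi>)) =
         Pi_pmf U False (\<lambda>_. bernoulli_pmf g) \<bind> (\<lambda>r.
           map_pmf (\<lambda>c. (card {i\<in>A. r i}, card {i\<in>B. r i}, c)) (binomial_pmf (card {i\<in>A. r i}) \<phi>))"
  unfolding Pi_pmf_cond_bernoulli[OF assms(1)] map_bind_pmf
proof (intro bind_pmf_cong refl, goal_cases)
  case (1 r)
  let ?Z = "Pi_pmf U False (\<lambda>i. bernoulli_pmf (if r i then \<phi> else \<psi>))"
  let ?X = "\<lambda>z. card {i\<in>{i\<in>A. r i}. z i}"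
  have "map_pmf (\<lambda>s. (card {i\<in>A. snd (s i)}, card {i\<in>B. snd (s i)}, card {i\<in>A. fst (s i) \<and> snd (s i)}))
          (map_pmf (\<lambda>z i. if i \<in> U then (z i, r i) else d) ?Z)
      = map_pmf (\<lambda>c. (card {i\<in>A. r i}, card {i\<in>B. r i}, c)) (map_pmf ?X ?Z)"
    unfolding map_pmf_comp using assms(2,3)
    by (intro map_pmf_cong refl arg_cong2[where f = Pair] arg_cong[where f = card]) auto
  also have "map_pmf ?X ?Z = binomial_pmf (card {i\<in>A. r i}) \<phi>"
    using assms by (intro card_Pi_pmf_bernoulli) auto
  finally show ?case .
qed

lemma prob_counts_Pi_cond_bernoulli:
  assumes "finite U" "B \<subseteq> A" "A \<subseteq> U" "g \<in> {0..1}" "\<phi> \<in> {0..1}"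
  shows "measure_pmf.prob (Pi_pmf U d (\<lambda>_. cond_bernoulli_pmf g \<phi> \<psi>))
           {s. card {i\<in>A. snd (s i)} = m \<and> card {i\<in>B. snd (s i)} = a \<and>
               card {i\<in>A. fst (s i) \<and> snd (s i)} = b}
       = measure_pmf.prob (Pi_pmf U d (\<lambda>_. cond_bernoulli_pmf g \<phi> \<psi>)) {s. card {i\<in>A. snd (s i)} = m}
         * hgeom (card A) (card B) m a * pmf (binomial_pmf m \<phi>) b"
proof -
  let ?P = "Pi_pmf U d (\<lambda>_. cond_bernoulli_pmf g \<phi> \<psi>)"
  let ?R = "Pi_pmf U False (\<lambda>_. bernoulli_pmf g)"
  let ?counts = "\<lambda>s. (card {i\<in>A. snd (s i)}, card {i\<in>B. snd (s i)}, card {i\<in>A. fst (s i) \<and> snd (s i)})"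
  let ?E = "{r. card {i\<in>A. r i} = m \<and> card {i\<in>B. r i} = a}"
  note joint = map_pmf_counts_Pi_cond_bernoulli[OF assms(1-3,5), of d g \<psi>]
  have "map_pmf (\<lambda>s. card {i\<in>A. snd (s i)}) ?P = map_pmf fst (map_pmf ?counts ?P)"
    by (simp add: map_pmf_comp)
  also have "\<dots> = map_pmf (\<lambda>r. card {i\<in>A. r i}) ?R"
    unfolding joint map_bind_pmf map_pmf_comp by (simp add: map_pmf_def)
  also have "\<dots> = binomial_pmf (card A) g"
    using assms by (intro card_Pi_pmf_bernoulli) auto
  finally have marginal_law: "map_pmf (\<lambda>s. card {i\<in>A. snd (s i)}) ?P = binomial_pmf (card A) g" .
  have marginal: "measure_pmf.prob ?P {s. card {i\<in>A. snd (s i)} = m} = pmf (binomial_pmf (card A) g) m"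
    unfolding marginal_law[symmetric] by (simp add: pmf_map vimage_def)
  have "measure_pmf.prob ?P {s. ?counts s = (m, a, b)} = pmf (map_pmf ?counts ?P) (m, a, b)"
    by (simp add: pmf_map vimage_def)
  also have "\<dots> = measure_pmf.expectation ?R (\<lambda>r. indicator ?E r * pmf (binomial_pmf m \<phi>) b)"
    unfolding joint pmf_bind
    by (intro Bochner_Integration.integral_cong refl)
      (auto simp: pmf_map vimage_def indicator_def measure_pmf_single)
  also have "\<dots> = measure_pmf.prob ?R ?E * pmf (binomial_pmf m \<phi>) b"
    by simp
  also have "\<dots> = pmf (binomial_pmf (card A) g) m * hgeom (card A) (card B) m a * pmf (binomial_pmf m \<phi>) b"
    using prob_card_Pi_pmf_bernoulli_hgeom[OF assms(1-4)] by simp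
  finally show ?thesis unfolding marginal by simp
qed

lemma pmf_map_Pair_left: "pmf (map_pmf (\<lambda>y. (x', y)) M) (x, y) = (if x = x' then pmf M y else 0)"
  by (auto simp: pmf_map_inj' inj_on_def pmf_eq_0_set_pmf)

lemma pmf_map_Pair_right: "pmf (map_pmf (\<lambda>x. (x, y')) M) (x, y) = (if y = y' then pmf M x else 0)"
  using pmf_map_inj'[of "\<lambda>x. (x, y')" M x] by (auto simp: inj_on_def pmf_eq_0_set_pmf)

lemma mixture_ratio_bounds:
  fixes p x y :: real
  assumes "p \<in> {0..1}" "x \<in> {0..1}" "y \<in> {0..1}"
  shows "p * x + (1 - p) * y \<in> {0..1}" "p * x / (p * x + (1 - p) * y) \<in> {0..1}"
proof -
  have "0 \<le> p * x" "0 \<le> (1 - p) * y" "p * x \<le> p" "(1 - p) * y \<le> 1 - p"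
    using assms by (auto intro: mult_left_le)
  then show "p * x + (1 - p) * y \<in> {0..1}" "p * x / (p * x + (1 - p) * y) \<in> {0..1}"
    by (auto simp: divide_le_eq_1)
qed

lemma bernoulli_bind_eq_cond_bernoulli_pmf:
  fixes p g1 g0 :: real
  assumes "p \<in> {0..1}" "g1 \<in> {0..1}" "g0 \<in> {0..1}"
  defines "g \<equiv> p * g1 + (1 - p) * g0"
  shows "bernoulli_pmf p \<bind> (\<lambda>z. map_pmf (\<lambda>r. (z, r)) (bernoulli_pmf (if z then g1 else g0)))
       = cond_bernoulli_pmf g (p * g1 / g) (p * (1 - g1) / (1 - g))" (is "?lhs = ?rhs")
proof -
  have ratio: "(x + y) * (x / (x + y)) = x" "(x + y) * (1 - x / (x + y)) = y"
    if "0 \<le> x" "0 \<le> y" for x y :: real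
    using that by (cases "x + y = 0"; simp add: field_simps)+
  have split_g: "p * g1 + (1 - p) * g0 = g" "p * (1 - g1) + (1 - p) * (1 - g0) = 1 - g"
    unfolding g_def by (simp_all add: algebra_simps)
  have "1 - g1 \<in> {0..1}" "1 - g0 \<in> {0..1}" using assms(2,3) by auto
  note bounds = mixture_ratio_bounds[OF assms(1-3), unfolded split_g]
    mixture_ratio_bounds[OF assms(1) this, unfolded split_g]
  have "0 \<le> p * g1" "0 \<le> (1 - p) * g0" "0 \<le> p * (1 - g1)" "0 \<le> (1 - p) * (1 - g0)"
    using assms(1-3) by simp_all
  note products = ratio[OF this(1,2), unfolded split_g] ratio[OF this(3,4), unfolded split_g]
  show ?thesis
  proof (rule pmf_eqI)
    fix x :: "bool \<times> bool"
    obtain z r where "x = (z, r)" by fastforce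
    then show "pmf ?lhs x = pmf ?rhs x"
      using assms(1-3) bounds products unfolding cond_bernoulli_pmf_def
      by (cases z; cases r) (simp_all add: pmf_bind pmf_map_Pair_left pmf_map_Pair_right mult.commute)
  qed
qed

section \<open>Finite statistics of product measures\<close>

lemma measure_PiM_statistic_eq_Pi_pmf:
  fixes M :: "'a measure" and s :: "'a \<Rightarrow> 'b::finite" and q :: "'b pmf"
  assumes "finite U" "prob_space M"
    and sets_stat: "\<And>y. s -` {y} \<inter> space M \<in> sets M"
    and measure_stat: "\<And>y. measure M (s -` {y} \<inter> space M) = pmf q y"
  shows "measure (PiM U (\<lambda>_. M))
           {\<omega> \<in> space (PiM U (\<lambda>_. M)). (\<lambda>i. if i \<in> U then s (\<omega> i) else d) \<in> E}
       = measure_pmf.prob (Pi_pmf U d (\<lambda>_. q)) E"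
proof -
  interpret M: prob_space M by fact
  interpret P: product_prob_space "\<lambda>_. M" U by unfold_locales
  let ?D = "PiM U (\<lambda>_. M)" and ?P = "Pi_pmf U d (\<lambda>_. q)"
  let ?S = "\<lambda>\<omega> i. if i \<in> U then s (\<omega> i) else d"
  let ?Y = "PiE_dflt U d (\<lambda>_. UNIV)"
  define cyl where "cyl y = PiE U (\<lambda>i. s -` {y i} \<inter> space M)" for y
  have fin: "finite ?Y" using assms(1) by (intro finite_PiE_dflt) auto
  have S_in_Y: "?S \<omega> \<in> ?Y" for \<omega> by (auto simp: PiE_dflt_def)
  have fiber: "{\<omega> \<in> space ?D. ?S \<omega> = y} = cyl y" if "y \<in> ?Y" for y
  proof (intro set_eqI iffI)
    fix \<omega> assume \<omega>: "\<omega> \<in> {\<omega> \<in> space ?D. ?S \<omega> = y}"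
    then have "\<omega> \<in> PiE U (\<lambda>_. space M)" by (simp add: space_PiM)
    moreover have "s (\<omega> i) = y i" if "i \<in> U" for i
      using \<omega> that by (auto dest: fun_cong[where x = i])
    ultimately show "\<omega> \<in> cyl y" by (auto simp: cyl_def PiE_iff)
  next
    fix \<omega> assume "\<omega> \<in> cyl y"
    then have "\<omega> \<in> PiE U (\<lambda>_. space M)" "?S \<omega> = y"
      using \<open>y \<in> ?Y\<close> by (auto simp: cyl_def PiE_iff PiE_dflt_def)
    then show "\<omega> \<in> {\<omega> \<in> space ?D. ?S \<omega> = y}" by (simp add: space_PiM)
  qed
  have cyl_sets: "cyl y \<in> sets ?D" for y
    unfolding cyl_def using assms(1) sets_stat by (intro sets_PiM_I_finite) auto
  have measure_cyl: "measure ?D (cyl y) = pmf ?P y" if "y \<in> ?Y" for y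
  proof -
    have "emeasure ?D (cyl y) = (\<Prod>i\<in>U. ennreal (pmf q (y i)))"
      unfolding cyl_def using assms(1) sets_stat
      by (simp add: P.emeasure_PiM M.emeasure_eq_measure measure_stat)
    then show ?thesis
      using that assms(1)
      by (simp add: P.emeasure_eq_measure prod_ennreal pmf_Pi PiE_dflt_def prod_nonneg)
  qed
  have fiber_sets: "{\<omega> \<in> space ?D. ?S \<omega> = y} \<in> sets ?D" if "y \<in> ?Y" for y
    using fiber[OF that] cyl_sets by simp
  have "measure ?D {\<omega> \<in> space ?D. ?S \<omega> \<in> E}
      = measure ?D (\<Union>y\<in>E \<inter> ?Y. {\<omega> \<in> space ?D. ?S \<omega> = y})"
    using S_in_Y by (intro arg_cong[where f = "measure ?D"]) auto
  also have "\<dots> = (\<Sum>y\<in>E \<inter> ?Y. measure ?D {\<omega> \<in> space ?D. ?S \<omega> = y})"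
    using fin fiber_sets by (intro P.finite_measure_finite_Union) (auto simp: disjoint_family_on_def)
  also have "\<dots> = (\<Sum>y\<in>E \<inter> ?Y. pmf ?P y)"
    by (intro sum.cong refl) (simp add: fiber measure_cyl)
  also have "\<dots> = measure_pmf.prob ?P (E \<inter> ?Y)"
    using fin by (simp add: measure_measure_pmf_finite)
  also have "\<dots> = measure_pmf.prob ?P E"
    using set_Pi_pmf_subset'[OF assms(1), of d "\<lambda>_. q"]
    by (intro measure_prob_cong_0) (auto simp: PiE_dflt_def set_pmf_eq)
  finally show ?thesis .
qed

section \<open>The censored survival design under the null hypothesis\<close>

definition arm_uncensored :: "real \<Rightarrow> bool \<times> ennreal \<times> ennreal \<Rightarrow> bool \<times> bool" where
  "arm_uncensored t x = (fst x, ennreal t \<le> (if fst x then fst (snd x) else snd (snd x)))"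

definition risk_profile :: "nat \<Rightarrow> real \<Rightarrow> outcome \<Rightarrow> nat \<Rightarrow> bool \<times> bool" where
  "risk_profile n t \<omega> = (\<lambda>i. if i \<in> {..<n} then arm_uncensored t (\<omega> i) else (False, False))"

lemma G1_G0_in_unit:
  assumes "prob_space Cd"
  shows "G1 Cd t \<in> {0..1}" "G0 Cd t \<in> {0..1}"
  using prob_space.prob_le_1[OF assms] by (simp_all add: G1_def G0_def)

lemma
  assumes "prob_space Cd" "sets Cd = sets (borel \<Otimes>\<^sub>M borel :: (ennreal \<times> ennreal) measure)"
  shows sets_uncensored: "{c. (ennreal t \<le> (if z then fst c else snd c)) = r} \<in> sets Cd"
    and measure_uncensored: "measure Cd {c. (ennreal t \<le> (if z then fst c else snd c)) = r}
           = pmf (bernoulli_pmf (if z then G1 Cd t else G0 Cd t)) r"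
proof -
  interpret prob_space Cd by fact
  have space: "space Cd = UNIV"
    using sets_eq_imp_space_eq[OF assms(2)] by (simp add: space_pair_measure)
  have sets: "{c. (ennreal t \<le> (if z then fst c else snd c)) = r} \<in> sets Cd" for z r
  proof -
    have "{c \<in> space (borel \<Otimes>\<^sub>M borel). (ennreal t \<le> (if z then fst c else snd c)) = r}
        \<in> sets (borel \<Otimes>\<^sub>M borel :: (ennreal \<times> ennreal) measure)"
      by measurable
    then show ?thesis by (simp add: assms(2) space_pair_measure)
  qed
  then show "{c. (ennreal t \<le> (if z then fst c else snd c)) = r} \<in> sets Cd" .
  have "measure Cd {c. (ennreal t \<le> (if z then fst c else snd c)) = False}
      = 1 - measure Cd {c. (ennreal t \<le> (if z then fst c else snd c)) = True}"
    using prob_compl[OF sets[of z True]]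
    by (simp add: space Compl_eq_Diff_UNIV[symmetric] Collect_neg_eq[symmetric])
  moreover have "measure Cd {c. (ennreal t \<le> (if z then fst c else snd c)) = True}
      = (if z then G1 Cd t else G0 Cd t)"
    by (simp add: G1_def G0_def space)
  moreover have "(if z then G1 Cd t else G0 Cd t) \<in> {0..1}"
    using G1_G0_in_unit[OF assms(1)] by simp
  ultimately show "measure Cd {c. (ennreal t \<le> (if z then fst c else snd c)) = r}
      = pmf (bernoulli_pmf (if z then G1 Cd t else G0 Cd t)) r"
    by (cases r) auto
qed

lemma
  fixes p :: real and Cd :: "(ennreal \<times> ennreal) measure"
  assumes "prob_space Cd" "sets Cd = sets (borel \<Otimes>\<^sub>M borel)"
  defines "M \<equiv> measure_pmf (bernoulli_pmf p) \<Otimes>\<^sub>M Cd"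
  shows sets_arm_uncensored: "arm_uncensored t -` {y} \<inter> space M \<in> sets M"
    and measure_arm_uncensored: "measure M (arm_uncensored t -` {(z, r)} \<inter> space M)
          = pmf (bernoulli_pmf p) z * pmf (bernoulli_pmf (if z then G1 Cd t else G0 Cd t)) r"
proof -
  let ?F = "\<lambda>z r. {c. (ennreal t \<le> (if z then fst c else snd c)) = r}"
  interpret Cd: prob_space Cd by fact
  have "space M = UNIV"
    using sets_eq_imp_space_eq[OF assms(2)] by (simp add: M_def space_pair_measure)
  then have vimage: "arm_uncensored t -` {(z, r)} \<inter> space M = {z} \<times> ?F z r" for z r
    by (auto simp: arm_uncensored_def)
  show "arm_uncensored t -` {y} \<inter> space M \<in> sets M"
    using sets_uncensored[OF assms(1,2)] unfolding M_def
    by (cases y) (auto simp: vimage[unfolded M_def] intro: pair_measureI)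
  have "emeasure M (arm_uncensored t -` {(z, r)} \<inter> space M)
      = emeasure (bernoulli_pmf p) {z} * emeasure Cd (?F z r)"
    unfolding vimage using sets_uncensored[OF assms(1,2)] unfolding M_def
    by (intro Cd.emeasure_pair_measure_Times) auto
  then have "measure M (arm_uncensored t -` {(z, r)} \<inter> space M)
      = measure (bernoulli_pmf p) {z} * measure Cd (?F z r)"
    by (simp only: measure_def enn2real_mult)
  also have "\<dots> = pmf (bernoulli_pmf p) z * pmf (bernoulli_pmf (if z then G1 Cd t else G0 Cd t)) r"
    by (simp only: measure_pmf_single measure_uncensored[OF assms(1,2)])
  finally show "measure M (arm_uncensored t -` {(z, r)} \<inter> space M)
      = pmf (bernoulli_pmf p) z * pmf (bernoulli_pmf (if z then G1 Cd t else G0 Cd t)) r" .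
qed

lemma design_risk_profile_law:
  assumes "prob_space Cd" "sets Cd = sets (borel \<Otimes>\<^sub>M borel :: (ennreal \<times> ennreal) measure)"
    and "p1 \<in> {0..1}"
  shows "measure (design n p1 Cd) {\<omega> \<in> space (design n p1 Cd). risk_profile n t \<omega> \<in> E}
       = measure_pmf.prob (Pi_pmf {..<n} (False, False) (\<lambda>_. cond_bernoulli_pmf (Gmix p1 Cd t)
           (p1 * G1 Cd t / Gmix p1 Cd t) (p1 * (1 - G1 Cd t) / (1 - Gmix p1 Cd t)))) E"
proof -
  let ?M = "measure_pmf (bernoulli_pmf p1) \<Otimes>\<^sub>M Cd"
  let ?q = "cond_bernoulli_pmf (Gmix p1 Cd t)
              (p1 * G1 Cd t / Gmix p1 Cd t) (p1 * (1 - G1 Cd t) / (1 - Gmix p1 Cd t))"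
  have bayes: "bernoulli_pmf p1 \<bind>
        (\<lambda>z. map_pmf (\<lambda>r. (z, r)) (bernoulli_pmf (if z then G1 Cd t else G0 Cd t))) = ?q"
    unfolding Gmix_def using assms(3) G1_G0_in_unit[OF assms(1)]
    by (intro bernoulli_bind_eq_cond_bernoulli_pmf)
  have "measure ?M (arm_uncensored t -` {y} \<inter> space ?M) = pmf ?q y" for y
    unfolding bayes[symmetric] using assms(3)
    by (cases y; cases "fst y")
      (simp_all add: measure_arm_uncensored[OF assms(1,2)] pmf_bind pmf_map_Pair_left)
  then show ?thesis
    unfolding design_def risk_profile_def
    by (intro measure_PiM_statistic_eq_Pi_pmf sets_arm_uncensored[OF assms(1,2)] prob_space_pair
        prob_space_measure_pmf assms(1)) auto
qed

lemma tval_mem_image: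
  assumes "1 \<le> k" "k \<le> Kval n T0"
  shows "tval n T0 k \<in> T0 ` {..<n}"
proof -
  have "k - 1 < length (sorted_list_of_set (T0 ` {..<n}))"
    using assms by (simp add: Kval_def)
  then have "sorted_list_of_set (T0 ` {..<n}) ! (k - 1) \<in> set (sorted_list_of_set (T0 ` {..<n}))"
    by (rule nth_mem)
  then show ?thesis unfolding tval_def by simp
qed

lemma at_risk_iff_uncensored:
  assumes "T1 i = T0 i" "0 \<le> T0 i"
  shows "ennreal t \<le> Wr T1 T0 \<omega> i \<longleftrightarrow> t \<le> T0 i \<and> snd (arm_uncensored t (\<omega> i))"
  using assms
  by (simp add: Wr_def Tr_def Cr_def C1v_def C0v_def Zv_def arm_uncensored_def ennreal_le_iff)

lemma event_at_iff_uncensored: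
  assumes "T1 i = T0 i" "0 \<le> T0 i" "0 \<le> t"
  shows "Deltar T1 T0 \<omega> i \<and> Wr T1 T0 \<omega> i = ennreal t \<longleftrightarrow> T0 i = t \<and> snd (arm_uncensored t (\<omega> i))"
  using assms
  by (auto simp: Deltar_def Wr_def Tr_def Cr_def C1v_def C0v_def Zv_def arm_uncensored_def min_def)

lemma Nk_eq_card_risk_profile:
  assumes "\<forall>i<n. T1 i = T0 i" "\<forall>i<n. 0 \<le> T0 i"
  shows "Nk n T1 T0 k \<omega>
       = card {i\<in>{i\<in>{..<n}. tval n T0 k \<le> T0 i}. snd (risk_profile n (tval n T0 k) \<omega> i)}"
  unfolding Nk_def using assms
  by (intro arg_cong[where f = card]) (auto simp: at_risk_iff_uncensored risk_profile_def)

lemma N1k_eq_card_risk_profile: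
  assumes "\<forall>i<n. T1 i = T0 i" "\<forall>i<n. 0 \<le> T0 i"
  shows "N1k n T1 T0 k \<omega>
       = card {i\<in>{i\<in>{..<n}. tval n T0 k \<le> T0 i}.
                 fst (risk_profile n (tval n T0 k) \<omega> i) \<and> snd (risk_profile n (tval n T0 k) \<omega> i)}"
  unfolding N1k_def using assms
  by (intro arg_cong[where f = card])
    (auto simp: at_risk_iff_uncensored risk_profile_def arm_uncensored_def Zv_def)

lemma Dk_eq_card_risk_profile:
  assumes "\<forall>i<n. T1 i = T0 i" "\<forall>i<n. 0 \<le> T0 i" "0 \<le> tval n T0 k"
  shows "Dk n T1 T0 k \<omega>
       = card {i\<in>{i\<in>{..<n}. T0 i = tval n T0 k}. snd (risk_profile n (tval n T0 k) \<omega> i)}"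
proof -
  let ?t = "tval n T0 k"
  have "i \<in> {..<n} \<and> Deltar T1 T0 \<omega> i \<and> Wr T1 T0 \<omega> i = ennreal ?t \<longleftrightarrow>
      i \<in> {i\<in>{..<n}. T0 i = ?t} \<and> snd (risk_profile n ?t \<omega> i)" for i
    using event_at_iff_uncensored[of T1 i T0 ?t \<omega>] assms
    by (cases "i < n") (simp_all add: risk_profile_def)
  then show ?thesis unfolding Dk_def by (simp only: Collect_conj_eq)
qed

theorem lemmaA3:
  fixes n :: nat and p1 :: real and Cd :: "(ennreal \<times> ennreal) measure"
    and T1 T0 :: "nat \<Rightarrow> real" and k :: nat
  assumes p1: "0 < p1" "p1 < 1"
    and Cd: "prob_space Cd" "sets Cd = sets (borel \<Otimes>\<^sub>M borel)"
    and Tnonneg: "\<forall>i<n. 0 \<le> T1 i \<and> 0 \<le> T0 i"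
    and H0: "\<forall>i<n. T1 i = T0 i"
    and k: "1 \<le> k" "k \<le> Kval n T0"
  shows "\<forall>m a b. measure (design n p1 Cd)
            {\<omega> \<in> space (design n p1 Cd). Nk n T1 T0 k \<omega> = m \<and> Dk n T1 T0 k \<omega> = a \<and> N1k n T1 T0 k \<omega> = b}
          = measure (design n p1 Cd) {\<omega> \<in> space (design n p1 Cd). Nk n T1 T0 k \<omega> = m}
            * hgeom (nval n T0 k) (dval n T0 k) m a
            * pmf (binomial_pmf m (phival p1 Cd n T0 k)) b"
proof (intro allI, goal_cases)
  case (1 m a b)
  let ?D = "design n p1 Cd" and ?t = "tval n T0 k"
  let ?A = "{i\<in>{..<n}. ?t \<le> T0 i}" and ?B = "{i\<in>{..<n}. T0 i = ?t}"
  let ?P = "Pi_pmf {..<n} (False, False) (\<lambda>_. cond_bernoulli_pmf (Gmix p1 Cd ?t)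
              (phival p1 Cd n T0 k) (p1 * (1 - G1 Cd ?t) / (1 - Gmix p1 Cd ?t)))"
  have T0_nonneg: "\<forall>i<n. 0 \<le> T0 i" using Tnonneg by simp
  have "0 \<le> ?t" using tval_mem_image[OF k] T0_nonneg by auto
  note counts = Nk_eq_card_risk_profile[OF H0 T0_nonneg] N1k_eq_card_risk_profile[OF H0 T0_nonneg]
    Dk_eq_card_risk_profile[OF H0 T0_nonneg \<open>0 \<le> ?t\<close>]
  have law: "measure ?D {\<omega> \<in> space ?D. risk_profile n ?t \<omega> \<in> E} = measure_pmf.prob ?P E" for E
    using design_risk_profile_law[OF Cd] p1 by (simp add: phival_def)
  have bounds: "Gmix p1 Cd ?t \<in> {0..1}" "phival p1 Cd n T0 k \<in> {0..1}"
    using mixture_ratio_bounds[OF _ G1_G0_in_unit[OF Cd(1), of ?t]] p1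
    unfolding phival_def Gmix_def by auto
  have "measure ?D {\<omega> \<in> space ?D. Nk n T1 T0 k \<omega> = m \<and> Dk n T1 T0 k \<omega> = a \<and> N1k n T1 T0 k \<omega> = b}
      = measure_pmf.prob ?P {s. card {i\<in>?A. snd (s i)} = m \<and> card {i\<in>?B. snd (s i)} = a \<and>
                                 card {i\<in>?A. fst (s i) \<and> snd (s i)} = b}"
    unfolding counts law[symmetric] by simp
  also have "\<dots> = measure_pmf.prob ?P {s. card {i\<in>?A. snd (s i)} = m}
      * hgeom (card ?A) (card ?B) m a * pmf (binomial_pmf m (phival p1 Cd n T0 k)) b"
    using bounds p1 by (intro prob_counts_Pi_cond_bernoulli) auto
  also have "measure_pmf.prob ?P {s. card {i\<in>?A. snd (s i)} = m}
      = measure ?D {\<omega> \<in> space ?D. Nk n T1 T0 k \<omega> = m}"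
    unfolding counts law[symmetric] by simp
  finally show ?case by (simp add: nval_def dval_def)
qed

end
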